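(* Let $\mathcal{S}$ be a sound and refutationally complete saturation system and let $\theta(x,y)$ be the formula $y+x=x\to y=0$. Then $\mathcal{S}+\mathrm{IND}^R_{\mathrm{PF}}(\mathrm{Open}(\mathcal{T}))$ refutes the clause set $\mathit{CNF}(\mathit{sk}^\exists(\mathcal{T}+\neg\forall x\,\theta(x,x)))$.
   Context: Linear arithmetic: language $\{0/0,s/1,p/1,+/2\}$; $\mathcal{T}$ is the theory with axioms (universally closed) $0\neq s(x)$, $p(0)=0$, $p(s(x))=x$, $x+0=x$, $x+s(y)=s(x+y)$. $\mathrm{Open}(\mathcal{T})$ is the set of quantifier-free formulas of this language. $\mathit{sk}^\exists$ is existential Skolemization with canonical Skolem symbols (a strong quantifier $QxA$ with free variables $\vec y$ is replaced by the term $\mathfrak{s}_{QxA}(\vec y)$, a new function symbol indexed by $QxA$); $\mathit{CNF}$ gives the clause set of the conjunctive normal form of universal sentences. $I_x\varphi=\forall\vec z(\varphi(0,\vec z)\wedge\forall x(\varphi(x,\vec z)\to\varphi(s(x),\vec z))\to\forall x\varphi(x,\vec z))$. Saturation systems: sets of rules $\mathcal{C}/\mathcal{D}$ ($\mathcal{C}$ clause set, $\mathcal{D}$ finite clause set), $+$ = union; a deduction from $\mathcal{C}_0$ is $\mathcal{D}_0=\mathcal{C}_0,\dots,\mathcal{D}_n$ with $\mathcal{D}_{i+1}=\mathcal{D}_i\cup\mathcal{B}_i$ for a rule $\mathcal{D}_i/\mathcal{B}_i$; a refutation has the empty clause in $\mathcal{D}_n$. Sound: any clause $C$ derivable from $\mathcal{C}_0$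 has $L(C)\subseteq L(\mathcal{C}_0)$ and $\mathcal{C}_0\models C$; refutationally complete: every inconsistent clause set has a refutation. $\mathrm{IND}^R_{\mathrm{PF}}(\Gamma)$ is the set of rules $\mathcal{C}/\mathit{CNF}(\mathit{sk}^\exists(I_x\varphi(x,\vec t)))$ for every clause set $\mathcal{C}$, every $\varphi(x,\vec z)\in\Gamma$ and every vector $\vec t$ of ground terms over the symbols occurring in $\mathcal{C}$. *)

theory Defs
  imports Main
begin

datatype trm = Var nat | App fsym "trm list"
and fsym = FZero | FSuc | FPred | FPlus | FSk fm
and fm = FBot | FEq trm trm | FNeg fm | FConj fm fm | FDisj fm fm | FImp fm fm
       | FAll nat fm | FEx nat fm

text \<open>A symbol of the language is a function symbol together with its arity.\<close>
type_synonym sym = "fsym \<times> nat"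

abbreviation zero :: trm where "zero \<equiv> App FZero []"
abbreviation sc :: "trm \<Rightarrow> trm" where "sc t \<equiv> App FSuc [t]"
abbreviation pd :: "trm \<Rightarrow> trm" where "pd t \<equiv> App FPred [t]"
abbreviation pl :: "trm \<Rightarrow> trm \<Rightarrow> trm" where "pl a b \<equiv> App FPlus [a, b]"

definition base_lang :: "sym set" where
  "base_lang = {(FZero, 0), (FSuc, 1), (FPred, 1), (FPlus, 2)}"

fun fvt :: "trm \<Rightarrow> nat set" where
  "fvt (Var x) = {x}"
| "fvt (App f ts) = (\<Union>t\<in>set ts. fvt t)"

fun symst :: "trm \<Rightarrow> sym set" where
  "symst (Var x) = {}"
| "symst (App f ts) = insert (f, length ts) (\<Union>t\<in>set ts. symst t)"

fun substt :: "(nat \<Rightarrow> trm) \<Rightarrow> trm \<Rightarrow> trm" where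
  "substt s (Var x) = s x"
| "substt s (App f ts) = App f (map (substt s) ts)"

definition ground :: "trm \<Rightarrow> bool" where "ground t \<longleftrightarrow> fvt t = {}"

fun fv :: "fm \<Rightarrow> nat set" where
  "fv FBot = {}"
| "fv (FEq s t) = fvt s \<union> fvt t"
| "fv (FNeg A) = fv A"
| "fv (FConj A B) = fv A \<union> fv B"
| "fv (FDisj A B) = fv A \<union> fv B"
| "fv (FImp A B) = fv A \<union> fv B"
| "fv (FAll x A) = fv A - {x}"
| "fv (FEx x A) = fv A - {x}"

fun syms :: "fm \<Rightarrow> sym set" where
  "syms FBot = {}"
| "syms (FEq s t) = symst s \<union> symst t"
| "syms (FNeg A) = syms A"
| "syms (FConj A B) = syms A \<union> syms B"
| "syms (FDisj A B) = syms A \<union> syms B"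
| "syms (FImp A B) = syms A \<union> syms B"
| "syms (FAll x A) = syms A"
| "syms (FEx x A) = syms A"

text \<open>Substitution (bound variables are not substituted; no renaming --
  adequate for rectified formulas, which are all that occur below).\<close>
fun subst :: "(nat \<Rightarrow> trm) \<Rightarrow> fm \<Rightarrow> fm" where
  "subst s FBot = FBot"
| "subst s (FEq a b) = FEq (substt s a) (substt s b)"
| "subst s (FNeg A) = FNeg (subst s A)"
| "subst s (FConj A B) = FConj (subst s A) (subst s B)"
| "subst s (FDisj A B) = FDisj (subst s A) (subst s B)"
| "subst s (FImp A B) = FImp (subst s A) (subst s B)"
| "subst s (FAll x A) = FAll x (subst (s(x := Var x)) A)"
| "subst s (FEx x A) = FEx x (subst (s(x := Var x)) A)"

fun qfree :: "fm \<Rightarrow> bool" where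
  "qfree FBot = True"
| "qfree (FEq a b) = True"
| "qfree (FNeg A) = qfree A"
| "qfree (FConj A B) = (qfree A \<and> qfree B)"
| "qfree (FDisj A B) = (qfree A \<and> qfree B)"
| "qfree (FImp A B) = (qfree A \<and> qfree B)"
| "qfree (FAll x A) = False"
| "qfree (FEx x A) = False"

definition Open_T :: "fm set" where
  "Open_T = {\<phi>. qfree \<phi> \<and> syms \<phi> \<subseteq> base_lang}"

text \<open>The Skolem term for the strong quantifier occurrence QxA (after the
  substitution of the Skolem terms for the enclosing strong quantifiers):
  the symbol indexed by QxA applied to its free variables (in increasing order).\<close>
definition skterm :: "fm \<Rightarrow> trm" where
  "skterm Q = App (FSk Q) (map Var (sorted_list_of_set (fv Q)))"

text \<open>sk env pol A: env is the substitution of Skolem terms for the variables of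
  the already eliminated strong quantifiers; pol is the polarity (True = positive).\<close>
fun sk :: "(nat \<Rightarrow> trm) \<Rightarrow> bool \<Rightarrow> fm \<Rightarrow> fm" where
  "sk e p FBot = FBot"
| "sk e p (FEq a b) = FEq (substt e a) (substt e b)"
| "sk e p (FNeg A) = FNeg (sk e (\<not> p) A)"
| "sk e p (FConj A B) = FConj (sk e p A) (sk e p B)"
| "sk e p (FDisj A B) = FDisj (sk e p A) (sk e p B)"
| "sk e p (FImp A B) = FImp (sk e (\<not> p) A) (sk e p B)"
| "sk e p (FAll x A) = (if p then FAll x (sk (e(x := Var x)) p A)
                        else sk (e(x := skterm (subst e (FAll x A)))) p A)"
| "sk e p (FEx x A) = (if p then sk (e(x := skterm (subst e (FEx x A)))) p A
                       else FEx x (sk (e(x := Var x)) p A))"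

definition sk_ex :: "fm \<Rightarrow> fm" where "sk_ex A = sk Var True A"

datatype lit = Pos trm trm | NegL trm trm

type_synonym clause = "lit set"

definition dist :: "clause set \<Rightarrow> clause set \<Rightarrow> clause set" where
  "dist X Y = {C \<union> D | C D. C \<in> X \<and> D \<in> Y}"

text \<open>cnf p A: clause set of the CNF of A (p = True) or of \<not>A (p = False), for
  universal (Skolemized, rectified) formulas: the remaining (weak) quantifiers are
  dropped, the variables of the clauses being implicitly universally quantified.\<close>
fun cnf :: "bool \<Rightarrow> fm \<Rightarrow> clause set" where
  "cnf p FBot = (if p then {{}} else {})"
| "cnf p (FEq a b) = (if p then {{Pos a b}} else {{NegL a b}})"
| "cnf p (FNeg A) = cnf (\<not> p) A"
| "cnf p (FConj A B) = (if p then cnf True A \<union> cnf True B else dist (cnf False A) (cnf False B))"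
| "cnf p (FDisj A B) = (if p then dist (cnf True A) (cnf True B) else cnf False A \<union> cnf False B)"
| "cnf p (FImp A B) = (if p then dist (cnf False A) (cnf True B) else cnf True A \<union> cnf False B)"
| "cnf p (FAll x A) = cnf p A"
| "cnf p (FEx x A) = cnf p A"

definition CNF :: "fm \<Rightarrow> clause set" where "CNF A = cnf True A"

definition CNF_sk :: "fm set \<Rightarrow> clause set" where
  "CNF_sk F = (\<Union>A\<in>F. CNF (sk_ex A))"

fun syms_lit :: "lit \<Rightarrow> sym set" where
  "syms_lit (Pos a b) = symst a \<union> symst b"
| "syms_lit (NegL a b) = symst a \<union> symst b"

definition syms_cl :: "clause \<Rightarrow> sym set" where "syms_cl C = (\<Union>l\<in>C. syms_lit l)"
definition syms_cs :: "clause set \<Rightarrow> sym set" where "syms_cs X = (\<Union>C\<in>X. syms_cl C)"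

text \<open>A structure: nonempty carrier D and interpretation of every symbol
  (the arity being the length of the argument list), closed on D.\<close>
definition is_struct :: "'u set \<Rightarrow> (fsym \<Rightarrow> 'u list \<Rightarrow> 'u) \<Rightarrow> bool" where
  "is_struct D I \<longleftrightarrow> D \<noteq> {} \<and> (\<forall>f xs. set xs \<subseteq> D \<longrightarrow> I f xs \<in> D)"

fun evalt :: "(fsym \<Rightarrow> 'u list \<Rightarrow> 'u) \<Rightarrow> (nat \<Rightarrow> 'u) \<Rightarrow> trm \<Rightarrow> 'u" where
  "evalt I b (Var x) = b x"
| "evalt I b (App f ts) = I f (map (evalt I b) ts)"

fun sat_lit :: "(fsym \<Rightarrow> 'u list \<Rightarrow> 'u) \<Rightarrow> (nat \<Rightarrow> 'u) \<Rightarrow> lit \<Rightarrow> bool" where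
  "sat_lit I b (Pos s t) = (evalt I b s = evalt I b t)"
| "sat_lit I b (NegL s t) = (evalt I b s \<noteq> evalt I b t)"

definition sat_cl :: "'u set \<Rightarrow> (fsym \<Rightarrow> 'u list \<Rightarrow> 'u) \<Rightarrow> clause \<Rightarrow> bool" where
  "sat_cl D I C \<longleftrightarrow> (\<forall>b. range b \<subseteq> D \<longrightarrow> (\<exists>l\<in>C. sat_lit I b l))"

definition model_cs :: "'u set \<Rightarrow> (fsym \<Rightarrow> 'u list \<Rightarrow> 'u) \<Rightarrow> clause set \<Rightarrow> bool" where
  "model_cs D I X \<longleftrightarrow> is_struct D I \<and> (\<forall>C\<in>X. sat_cl D I C)"

text \<open>Entailment and (in)consistency; structures are taken with carriers that
  are sets of natural numbers, which suffices by Loewenheim-Skolem (the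
  language is countable).\<close>
definition entails :: "clause set \<Rightarrow> clause \<Rightarrow> bool" where
  "entails X C \<longleftrightarrow> (\<forall>(D::nat set) I. model_cs D I X \<longrightarrow> sat_cl D I C)"

definition inconsistent :: "clause set \<Rightarrow> bool" where
  "inconsistent X \<longleftrightarrow> \<not> (\<exists>(D::nat set) I. model_cs D I X)"

type_synonym rule = "clause set \<times> clause set"

definition saturation_system :: "rule set \<Rightarrow> bool" where
  "saturation_system S \<longleftrightarrow> (\<forall>(C, D)\<in>S. finite D \<and> (\<forall>E\<in>D. finite E))"

definition deduction :: "rule set \<Rightarrow> clause set \<Rightarrow> clause set list \<Rightarrow> bool" where
  "deduction S C0 Ds \<longleftrightarrow> Ds \<noteq> [] \<and> hd Ds = C0 \<and>
     (\<forall>i. Suc i < length Ds \<longrightarrow> (\<exists>B. (Ds ! i, B) \<in> S \<and> Ds ! Suc i = Ds ! i \<union> B))"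

definition derivable :: "rule set \<Rightarrow> clause set \<Rightarrow> clause \<Rightarrow> bool" where
  "derivable S C0 C \<longleftrightarrow> (\<exists>Ds. deduction S C0 Ds \<and> C \<in> last Ds)"

definition refutes :: "rule set \<Rightarrow> clause set \<Rightarrow> bool" where
  "refutes S C0 \<longleftrightarrow> derivable S C0 {}"

definition sound :: "rule set \<Rightarrow> bool" where
  "sound S \<longleftrightarrow> (\<forall>C0 C. derivable S C0 C \<longrightarrow> syms_cl C \<subseteq> syms_cs C0 \<and> entails C0 C)"

definition refut_complete :: "rule set \<Rightarrow> bool" where
  "refut_complete S \<longleftrightarrow> (\<forall>C0. inconsistent C0 \<longrightarrow> refutes S C0)"

text \<open>I_x \<phi>(x, t): here \<phi> is the formula with the ground terms already substituted
  for the parameters (only x free).\<close>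
definition Ind :: "nat \<Rightarrow> fm \<Rightarrow> fm" where
  "Ind x \<phi> = FImp (FConj (subst (Var(x := zero)) \<phi>)
                          (FAll x (FImp \<phi> (subst (Var(x := sc (Var x))) \<phi>))))
                   (FAll x \<phi>)"

text \<open>IND^R_PF(\<Gamma>): rules C / CNF(sk(I_x \<phi>(x,t))) for \<phi>(x,z) \<in> \<Gamma> and ground
  terms t over the symbols of C substituted for the parameters z of \<phi>.\<close>
definition IND_R_PF :: "fm set \<Rightarrow> rule set" where
  "IND_R_PF \<Gamma> = {(C, CNF (sk_ex (Ind x (subst (\<sigma>(x := Var x)) \<phi>)))) | C \<phi> x \<sigma>.
      \<phi> \<in> \<Gamma> \<and> (\<forall>z\<in>fv \<phi> - {x}. ground (\<sigma> z) \<and> symst (\<sigma> z) \<subseteq> syms_cs C)}"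

definition T_ax :: "fm set" where
  "T_ax = { FAll 0 (FNeg (FEq zero (sc (Var 0)))),
            FEq (pd zero) zero,
            FAll 0 (FEq (pd (sc (Var 0))) (Var 0)),
            FAll 0 (FEq (pl (Var 0) zero) (Var 0)),
            FAll 0 (FAll 1 (FEq (pl (Var 0) (sc (Var 1))) (sc (pl (Var 0) (Var 1))))) }"

definition theta :: "trm \<Rightarrow> trm \<Rightarrow> fm" where
  "theta x y = FImp (FEq (pl y x) x) (FEq y zero)"

end

theory Submission
  imports Defs
begin

text \<open>Skolemizing the negated goal yields a constant \<open>c\<close> with \<open>c + c = c\<close> and \<open>c \<noteq> 0\<close>.
  One induction rule, on the open formula \<open>\<theta>(x, c) = (c + x = x \<rightarrow> c = 0)\<close>, adds clauses
  mentioning the Skolem constant \<open>d\<close> of the induction step, and the result is already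
  inconsistent: the conclusion \<open>\<forall>x. \<theta>(x, c)\<close> fails at \<open>x = c\<close>, the base case holds because
  \<open>c + 0 = c \<noteq> 0\<close>, and a failing step \<open>c + d \<noteq> d\<close>, \<open>c + s d = s d\<close> contradicts
  \<open>c + s d = s (c + d)\<close> together with \<open>p (s x) = x\<close>. So one induction step followed by a
  refutation in \<open>S\<close> does it; of the assumptions on \<open>S\<close> only refutational completeness is used.\<close>

lemma deduction_mono: "deduction S X Ds \<Longrightarrow> S \<subseteq> S' \<Longrightarrow> deduction S' X Ds"
  unfolding deduction_def by blast

lemma refutes_mono: "refutes S X \<Longrightarrow> S \<subseteq> S' \<Longrightarrow> refutes S' X"
  unfolding refutes_def derivable_def using deduction_mono by blast

lemma deduction_Cons:
  assumes rule: "(X, B) \<in> S" and ded: "deduction S (X \<union> B) Ds"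
  shows "deduction S X (X # Ds)"
  unfolding deduction_def
proof (intro conjI allI impI)
  fix i assume i: "Suc i < length (X # Ds)"
  show "\<exists>B. ((X # Ds) ! i, B) \<in> S \<and> (X # Ds) ! Suc i = (X # Ds) ! i \<union> B"
  proof (cases i)
    case 0
    then show ?thesis using rule ded by (auto simp: deduction_def hd_conv_nth)
  next
    case (Suc j)
    then show ?thesis using i ded by (auto simp: deduction_def)
  qed
qed simp_all

lemma refutes_rule_step: "(X, B) \<in> S \<Longrightarrow> refutes S (X \<union> B) \<Longrightarrow> refutes S X"
  unfolding refutes_def derivable_def
  by (metis deduction_Cons deduction_def last_ConsR)

lemma model_cs_sat_clause:
  "model_cs D I X \<Longrightarrow> C \<in> X \<Longrightarrow> range b \<subseteq> D \<Longrightarrow> \<exists>l\<in>C. sat_lit I b l"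
  unfolding model_cs_def sat_cl_def by blast

lemma dist_insert_left: "dist (insert C X) Y = (\<lambda>D. C \<union> D) ` Y \<union> dist X Y"
  and dist_empty_left: "dist {} Y = {}"
  unfolding dist_def by auto

definition c_sk :: trm where
  "c_sk = skterm (FAll 0 (theta (Var 0) (Var 0)))"

definition d_sk :: trm where
  "d_sk = skterm (FAll 0 (FImp (theta (Var 0) c_sk) (theta (sc (Var 0)) c_sk)))"

lemma CNF_sk_T_neg_theta:
  "CNF_sk (T_ax \<union> {FNeg (FAll 0 (theta (Var 0) (Var 0)))}) =
     {{NegL zero (sc (Var 0))}, {Pos (pd zero) zero}, {Pos (pd (sc (Var 0))) (Var 0)},
      {Pos (pl (Var 0) zero) (Var 0)},
      {Pos (pl (Var 0) (sc (Var 1))) (sc (pl (Var 0) (Var 1)))},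
      {Pos (pl c_sk c_sk) c_sk}, {NegL c_sk zero}}"
  by (auto simp: CNF_sk_def T_ax_def theta_def sk_ex_def CNF_def skterm_def c_sk_def
      dist_insert_left dist_empty_left)

text \<open>Clausal form of: the base case fails, or the step fails at \<open>d_sk\<close>, or
  \<open>c_sk + x = x \<longrightarrow> c_sk = 0\<close> for all \<open>x\<close>.\<close>

lemma CNF_sk_Ind_theta:
  "CNF (sk_ex (Ind 0 (theta (Var 0) c_sk))) =
     {{Pos c_sk zero, NegL (pl c_sk (Var 0)) (Var 0), Pos (pl c_sk zero) zero,
       NegL (pl c_sk d_sk) d_sk},
      {Pos c_sk zero, NegL (pl c_sk (Var 0)) (Var 0), Pos (pl c_sk zero) zero,
       Pos (pl c_sk (sc d_sk)) (sc d_sk)},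
      {Pos c_sk zero, NegL (pl c_sk (Var 0)) (Var 0), NegL c_sk zero, NegL (pl c_sk d_sk) d_sk},
      {Pos c_sk zero, NegL (pl c_sk (Var 0)) (Var 0), NegL c_sk zero,
       Pos (pl c_sk (sc d_sk)) (sc d_sk)},
      {Pos c_sk zero, NegL (pl c_sk (Var 0)) (Var 0), NegL c_sk zero},
      {Pos c_sk zero, NegL (pl c_sk (Var 0)) (Var 0), Pos (pl c_sk zero) zero, NegL c_sk zero}}"
  by (simp add: theta_def sk_ex_def CNF_def skterm_def Ind_def c_sk_def d_sk_def
      dist_insert_left dist_empty_left insert_commute)

lemma theta_Ind_rule:
  assumes "ground t" and "symst t \<subseteq> syms_cs X"
  shows "(X, CNF (sk_ex (Ind 0 (theta (Var 0) t)))) \<in> IND_R_PF Open_T"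
proof -
  have "theta (Var 0) (Var 1) \<in> Open_T"
    by (simp add: Open_T_def theta_def base_lang_def)
  moreover have "subst ((\<lambda>_. t)(0 := Var 0)) (theta (Var 0) (Var 1)) = theta (Var 0) t"
    by (simp add: theta_def)
  ultimately show ?thesis
    unfolding IND_R_PF_def mem_Collect_eq using assms
    by (intro exI[of _ X] exI[of _ "theta (Var 0) (Var 1)"] exI[of _ 0] exI[of _ "\<lambda>_. t"]) simp
qed

lemma inconsistent_T_neg_theta_Ind:
  "inconsistent (CNF_sk (T_ax \<union> {FNeg (FAll 0 (theta (Var 0) (Var 0)))}) \<union>
                 CNF (sk_ex (Ind 0 (theta (Var 0) c_sk))))"
  unfolding inconsistent_def
proof (intro notI, elim exE)
  fix D :: "nat set" and I
  assume model: "model_cs D I (CNF_sk (T_ax \<union> {FNeg (FAll 0 (theta (Var 0) (Var 0)))}) \<union>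
                               CNF (sk_ex (Ind 0 (theta (Var 0) c_sk))))"
  note clause = model_cs_sat_clause[OF model, unfolded CNF_sk_T_neg_theta CNF_sk_Ind_theta]
  have "is_struct D I" using model by (simp add: model_cs_def)
  then have closed [simp]: "set xs \<subseteq> D \<Longrightarrow> I f xs \<in> D" for f xs
    unfolding is_struct_def by blast
  have "\<exists>fc fd. c_sk = App fc [] \<and> d_sk = App fd []"
    by (simp add: c_sk_def d_sk_def skterm_def theta_def)
  then obtain fc fd where c_sk_App: "c_sk = App fc []" and d_sk_App: "d_sk = App fd []"
    by blast
  define c where "c = I fc []"
  define d where "d = I fd []"
  have "c \<in> D" "d \<in> D" by (simp_all add: c_def d_def)
  have add_zero: "I FPlus [u, I FZero []] = u" if "u \<in> D" for u
    using clause[of "{Pos (pl (Var 0) zero) (Var 0)}" "\<lambda>_. u"] that by auto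
  have add_suc: "I FPlus [u, I FSuc [v]] = I FSuc [I FPlus [u, v]]" if "u \<in> D" "v \<in> D" for u v
    using clause[of "{Pos (pl (Var 0) (sc (Var 1))) (sc (pl (Var 0) (Var 1)))}"
        "\<lambda>n. if n = 0 then u else v"] that by auto
  have pred_suc: "I FPred [I FSuc [u]] = u" if "u \<in> D" for u
    using clause[of "{Pos (pd (sc (Var 0))) (Var 0)}" "\<lambda>_. u"] that by auto
  have c_ne_zero: "c \<noteq> I FZero []"
    using clause[of "{NegL c_sk zero}" "\<lambda>_. c"] \<open>c \<in> D\<close> by (auto simp: c_def c_sk_App)
  have c_add_c: "I FPlus [c, c] = c"
    using clause[of "{Pos (pl c_sk c_sk) c_sk}" "\<lambda>_. c"] \<open>c \<in> D\<close> by (auto simp: c_def c_sk_App)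
  \<comment> \<open>at \<open>x = c\<close> the conclusion \<open>\<forall>x. \<theta>(x, c)\<close> fails and the base case holds, so the step fails\<close>
  have step_premise: "I FPlus [c, d] \<noteq> d"
    using clause[of "{Pos c_sk zero, NegL (pl c_sk (Var 0)) (Var 0), Pos (pl c_sk zero) zero,
        NegL (pl c_sk d_sk) d_sk}" "\<lambda>_. c"] \<open>c \<in> D\<close> c_ne_zero c_add_c add_zero[OF \<open>c \<in> D\<close>]
    by (auto simp: c_def d_def c_sk_App d_sk_App)
  have step_conclusion: "I FPlus [c, I FSuc [d]] = I FSuc [d]"
    using clause[of "{Pos c_sk zero, NegL (pl c_sk (Var 0)) (Var 0), Pos (pl c_sk zero) zero,
        Pos (pl c_sk (sc d_sk)) (sc d_sk)}" "\<lambda>_. c"] \<open>c \<in> D\<close> c_ne_zero c_add_c add_zero[OF \<open>c \<in> D\<close>]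
    by (auto simp: c_def d_def c_sk_App d_sk_App)
  have "I FPlus [c, d] = I FPred [I FSuc [I FPlus [c, d]]]"
    using \<open>c \<in> D\<close> \<open>d \<in> D\<close> by (simp add: pred_suc)
  also have "\<dots> = I FPred [I FPlus [c, I FSuc [d]]]"
    using \<open>c \<in> D\<close> \<open>d \<in> D\<close> by (simp add: add_suc)
  also have "\<dots> = d"
    using \<open>d \<in> D\<close> by (simp add: step_conclusion pred_suc)
  finally have "I FPlus [c, d] = d" .
  with step_premise show False ..
qed

theorem lemma9:
  fixes S :: "rule set"
  assumes "saturation_system S" and "sound S" and "refut_complete S"
  shows "refutes (S \<union> IND_R_PF Open_T)
           (CNF_sk (T_ax \<union> {FNeg (FAll 0 (theta (Var 0) (Var 0)))}))"
proof -
  let ?C = "CNF_sk (T_ax \<union> {FNeg (FAll 0 (theta (Var 0) (Var 0)))})"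
  let ?B = "CNF (sk_ex (Ind 0 (theta (Var 0) c_sk)))"
  have "{NegL c_sk zero} \<in> ?C"
    unfolding CNF_sk_T_neg_theta by simp
  then have "symst c_sk \<subseteq> syms_cs ?C"
    by (auto simp: syms_cs_def syms_cl_def)
  then have rule: "(?C, ?B) \<in> S \<union> IND_R_PF Open_T"
    by (intro UnI2 theta_Ind_rule) (simp_all add: ground_def c_sk_def skterm_def theta_def)
  have "refutes S (?C \<union> ?B)"
    using \<open>refut_complete S\<close> inconsistent_T_neg_theta_Ind by (simp add: refut_complete_def)
  then have "refutes (S \<union> IND_R_PF Open_T) (?C \<union> ?B)"
    by (rule refutes_mono) simp
  with rule show ?thesis
    by (rule refutes_rule_step)
qed

end
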